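(* A strategy of the chair is regret-free if and only if it never misses an opportunity and never takes a risk.
   Context: Let $\mathcal{X}$ be a finite set of alternatives. A proto-ranking is an irreflexive and transitive binary relation on $\mathcal{X}$; a ranking is a total proto-ranking; a tournament is a total and asymmetric binary relation on $\mathcal{X}$. The chair has a fixed preference $\succ$, a ranking on $\mathcal{X}$. Interaction: given a tournament $\mathrel{W}$, set $R_0=\varnothing$. In each period $t\geq1$ in which $R_{t-1}$ is not total, the chair offers a pair $\{x,y\}$ of distinct alternatives unranked by $R_{t-1}$; the winner is $x$ if $x\mathrel{W}y$ and $y$ otherwise, and $R_t$ is the transitive closure of $R_{t-1}\cup\{(\text{winner},\text{loser})\}$, stopping when $R_t$ is total. A history is a finite sequence of (winner, loser) pairs that can arise this way; terminal if its induced proto-ranking is total. A strategy assigns to each non-terminal history a pair unranked at that history. The outcome of $\sigma$ under $\mathrel{W}$ is the final ranking. A non-terminal history is on the path of $\sigma$ if it is generated by $\sigma$ and some tournament. A ranking is $\mathrel{W}$-feasible if it is the outcome under $\mathrel{W}$ of some strategy. $R$ is more aligned with $\succ$ than $R'$ if for all $x\succ y$, $xR'y$ implies $xRy$. A ranking is $\mathrel{W}$-unimprovable if no other $\mathrel{W}$-feasible ranking is more aligned with $\succ$. A strategy is regret-free if for every tournament $\mathrel{W}$ its outcome under $\mathrel{W}$ is $\mathrel{W}$-unimprovable. Errors: let $R$ be a non-total proto-ranking and $x\succ y$ alternatives unranked by $R$. Offering $\{x,y\}$ misses an opportunity at $R$ if there is $z$ with $x\succ z\succ y$ and neither $yRz$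 nor $zRx$. Offering $\{x,y\}$ takes a risk at $R$ if there is $z$ with either (a) $z\succ y$, $xRz$ and not $yRz$, or (b) $x\succ z$, $zRy$ and not $zRx$. A strategy never misses an opportunity (never takes a risk) if at no history on its path does the pair it offers miss an opportunity (take a risk) at the current proto-ranking. *)

theory Defs
  imports Main
begin

(* Alternatives: the elements of a finite type 'a (X = UNIV).
   Binary relations: ('a \<times> 'a) set, (x,y) \<in> R meaning x R y. *)

definition proto_ranking :: "('a \<times> 'a) set \<Rightarrow> bool" where
  "proto_ranking R \<longleftrightarrow> irrefl R \<and> trans R"

definition ranking :: "('a \<times> 'a) set \<Rightarrow> bool" where
  "ranking R \<longleftrightarrow> proto_ranking R \<and> total R"

definition tournament :: "('a \<times> 'a) set \<Rightarrow> bool" where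
  "tournament W \<longleftrightarrow> total W \<and> asym W"

definition unranked :: "('a \<times> 'a) set \<Rightarrow> 'a \<Rightarrow> 'a \<Rightarrow> bool" where
  "unranked R x y \<longleftrightarrow> x \<noteq> y \<and> (x, y) \<notin> R \<and> (y, x) \<notin> R"

(* A history is a list of (winner, loser) pairs; its induced proto-ranking
   is the transitive closure of the set of these pairs. *)
definition hist_rel :: "('a \<times> 'a) list \<Rightarrow> ('a \<times> 'a) set" where
  "hist_rel h = trancl (set h)"

definition terminal :: "('a \<times> 'a) list \<Rightarrow> bool" where
  "terminal h \<longleftrightarrow> total (hist_rel h)"

inductive history :: "('a \<times> 'a) list \<Rightarrow> bool" where
  Nil: "history []"
| snoc: "history h \<Longrightarrow> \<not> terminal h \<Longrightarrow> unranked (hist_rel h) x y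
         \<Longrightarrow> history (h @ [(x, y)])"

definition strategy :: "(('a \<times> 'a) list \<Rightarrow> 'a set) \<Rightarrow> bool" where
  "strategy \<sigma> \<longleftrightarrow> (\<forall>h. history h \<and> \<not> terminal h \<longrightarrow>
      (\<exists>x y. \<sigma> h = {x, y} \<and> unranked (hist_rel h) x y))"

inductive gen :: "(('a \<times> 'a) list \<Rightarrow> 'a set) \<Rightarrow> ('a \<times> 'a) set \<Rightarrow> ('a \<times> 'a) list \<Rightarrow> bool"
  for \<sigma> W where
  Nil: "gen \<sigma> W []"
| step: "gen \<sigma> W h \<Longrightarrow> \<not> terminal h \<Longrightarrow> \<sigma> h = {x, y} \<Longrightarrow> unranked (hist_rel h) x y
         \<Longrightarrow> (x, y) \<in> W \<Longrightarrow> gen \<sigma> W (h @ [(x, y)])"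

definition outcome :: "(('a \<times> 'a) list \<Rightarrow> 'a set) \<Rightarrow> ('a \<times> 'a) set \<Rightarrow> ('a \<times> 'a) set \<Rightarrow> bool" where
  "outcome \<sigma> W R \<longleftrightarrow> (\<exists>h. gen \<sigma> W h \<and> terminal h \<and> hist_rel h = R)"

definition feasible :: "('a \<times> 'a) set \<Rightarrow> ('a \<times> 'a) set \<Rightarrow> bool" where
  "feasible W R \<longleftrightarrow> (\<exists>\<sigma>. strategy \<sigma> \<and> outcome \<sigma> W R)"

definition more_aligned :: "('a \<times> 'a) set \<Rightarrow> ('a \<times> 'a) set \<Rightarrow> ('a \<times> 'a) set \<Rightarrow> bool" where
  "more_aligned P R R' \<longleftrightarrow> (\<forall>x y. (x, y) \<in> P \<longrightarrow> (x, y) \<in> R' \<longrightarrow> (x, y) \<in> R)"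

definition unimprovable :: "('a \<times> 'a) set \<Rightarrow> ('a \<times> 'a) set \<Rightarrow> ('a \<times> 'a) set \<Rightarrow> bool" where
  "unimprovable P W R \<longleftrightarrow> \<not> (\<exists>R'. feasible W R' \<and> R' \<noteq> R \<and> more_aligned P R' R)"

definition regret_free :: "('a \<times> 'a) set \<Rightarrow> (('a \<times> 'a) list \<Rightarrow> 'a set) \<Rightarrow> bool" where
  "regret_free P \<sigma> \<longleftrightarrow> (\<forall>W R. tournament W \<longrightarrow> outcome \<sigma> W R \<longrightarrow> unimprovable P W R)"

definition misses_opportunity :: "('a \<times> 'a) set \<Rightarrow> ('a \<times> 'a) set \<Rightarrow> 'a \<Rightarrow> 'a \<Rightarrow> bool" where
  "misses_opportunity P R x y \<longleftrightarrow>
     (\<exists>z. (x, z) \<in> P \<and> (z, y) \<in> P \<and> (y, z) \<notin> R \<and> (z, x) \<notin> R)"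

definition takes_risk :: "('a \<times> 'a) set \<Rightarrow> ('a \<times> 'a) set \<Rightarrow> 'a \<Rightarrow> 'a \<Rightarrow> bool" where
  "takes_risk P R x y \<longleftrightarrow>
     (\<exists>z. ((z, y) \<in> P \<and> (x, z) \<in> R \<and> (y, z) \<notin> R) \<or>
          ((x, z) \<in> P \<and> (z, y) \<in> R \<and> (z, x) \<notin> R))"

definition on_path :: "(('a \<times> 'a) list \<Rightarrow> 'a set) \<Rightarrow> ('a \<times> 'a) list \<Rightarrow> bool" where
  "on_path \<sigma> h \<longleftrightarrow> \<not> terminal h \<and> (\<exists>W. tournament W \<and> gen \<sigma> W h)"

(* the offered pair is written {x,y} with x \<succ> y *)
definition never_misses :: "('a \<times> 'a) set \<Rightarrow> (('a \<times> 'a) list \<Rightarrow> 'a set) \<Rightarrow> bool" where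
  "never_misses P \<sigma> \<longleftrightarrow> (\<forall>h x y. on_path \<sigma> h \<longrightarrow> \<sigma> h = {x, y} \<longrightarrow> (x, y) \<in> P \<longrightarrow>
      \<not> misses_opportunity P (hist_rel h) x y)"

definition never_risks :: "('a \<times> 'a) set \<Rightarrow> (('a \<times> 'a) list \<Rightarrow> 'a set) \<Rightarrow> bool" where
  "never_risks P \<sigma> \<longleftrightarrow> (\<forall>h x y. on_path \<sigma> h \<longrightarrow> \<sigma> h = {x, y} \<longrightarrow> (x, y) \<in> P \<longrightarrow>
      \<not> takes_risk P (hist_rel h) x y)"

end

(* Call the completion of a proto-ranking S the relation that extends S by the chair's
   preference on every pair left unranked by S.  Offering x \<succ> y neither misses an
   opportunity nor takes a risk exactly when (x, y) is a covering pair of the completion.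
   Playing such a pair either confirms the completion or reorients one of its covering
   pairs, so the completion stays a ranking and each of its inversions is a match decided
   directly by the tournament.  A feasible ranking more aligned with \<succ> than the outcome
   would have to reverse one of those matches, so the outcome is unimprovable.
   Conversely, if the chair first offers a non-covering pair x \<succ> y of the completion L,
   let the tournament agree with L except that y beats x.  All covering pairs of L win, so
   L is feasible, and L is more aligned with \<succ> than the actual outcome, which puts y
   above x. *)

theory Submission
  imports Defs
begin

lemma unranked_sym: "unranked S x y \<longleftrightarrow> unranked S y x"
  by (auto simp: unranked_def)

lemma ranking_asym: "ranking R \<Longrightarrow> asym R"
  by (auto simp: ranking_def proto_ranking_def asym_on_iff_irrefl_on_if_trans_on)

lemma ranking_imp_tournament: "ranking R \<Longrightarrow> tournament R"
  by (simp add: ranking_asym ranking_def tournament_def)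

lemma total_subset_asym_eq:
  assumes "total S" "S \<subseteq> R" "asym R"
  shows "S = R"
proof (rule subset_antisym)
  show "R \<subseteq> S"
  proof (rule subrelI)
    fix a b
    assume "(a, b) \<in> R"
    with assms(2,3) have "a \<noteq> b" "(b, a) \<notin> S"
      by (auto dest: asymD)
    with assms(1) show "(a, b) \<in> S"
      by (auto simp: total_on_def)
  qed
qed (fact assms(2))

lemma trancl_subset_trans: "trans R \<Longrightarrow> S \<subseteq> R \<Longrightarrow> S\<^sup>+ \<subseteq> R"
  by (metis trancl_id trancl_mono_subset)

section \<open>Histories and plays\<close>

lemma hist_rel_snoc: "hist_rel (h @ [p]) = (insert p (hist_rel h))\<^sup>+"
proof
  have "set (h @ [p]) \<subseteq> insert p (hist_rel h)"
    unfolding hist_rel_def by auto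
  then show "hist_rel (h @ [p]) \<subseteq> (insert p (hist_rel h))\<^sup>+"
    unfolding hist_rel_def by (rule trancl_mono_subset)
  have "insert p (hist_rel h) \<subseteq> hist_rel (h @ [p])"
    unfolding hist_rel_def by (simp add: r_into_trancl' trancl_mono_subset subset_insertI)
  then show "(insert p (hist_rel h))\<^sup>+ \<subseteq> hist_rel (h @ [p])"
    unfolding hist_rel_def by (simp add: trancl_subset_trans)
qed

lemma trans_hist_rel: "trans (hist_rel h)"
  by (simp add: hist_rel_def)

lemma gen_history: "gen \<sigma> W h \<Longrightarrow> history h"
  by (induction rule: gen.induct) (auto intro: history.intros)

lemma gen_set_subset: "gen \<sigma> W h \<Longrightarrow> set h \<subseteq> W"
  by (induction rule: gen.induct) auto

lemma gen_mono: "gen \<sigma> W h \<Longrightarrow> set h \<subseteq> W' \<Longrightarrow> gen \<sigma> W' h"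
  by (induction rule: gen.induct) (auto intro: gen.intros)

lemma history_acyclic: "history h \<Longrightarrow> acyclic (set h)"
proof (induction rule: history.induct)
  case Nil
  show ?case by (simp add: acyclic_def)
next
  case (snoc h x y)
  then show ?case
    by (auto simp: acyclic_insert unranked_def hist_rel_def rtrancl_eq_or_trancl)
qed

lemma terminal_history_ranking:
  assumes "history h" "terminal h"
  shows "ranking (hist_rel h)"
  using assms history_acyclic[OF assms(1)]
  by (simp add: ranking_def proto_ranking_def terminal_def hist_rel_def acyclic_irrefl)

lemma strategy_offers_unranked:
  assumes "strategy \<sigma>" "history h" "\<not> terminal h" "\<sigma> h = {x, y}"
  shows "unranked (hist_rel h) x y"
proof -
  from assms(1-3) obtain a b where "\<sigma> h = {a, b}" "unranked (hist_rel h) a b"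
    unfolding strategy_def by blast
  with assms(4) show ?thesis
    by (auto simp: doubleton_eq_iff unranked_sym)
qed

lemma gen_extends_to_terminal:
  fixes \<sigma> :: "('a::finite \<times> 'a) list \<Rightarrow> 'a set"
  assumes \<sigma>: "strategy \<sigma>" and W: "tournament W" and h: "gen \<sigma> W h"
  shows "\<exists>h'. gen \<sigma> W h' \<and> terminal h' \<and> hist_rel h \<subseteq> hist_rel h'"
  using h
proof (induction "card (- hist_rel h)" arbitrary: h rule: less_induct)
  case less
  show ?case
  proof (cases "terminal h")
    case True
    with less.prems show ?thesis by blast
  next
    case False
    obtain a b where ab: "\<sigma> h = {a, b}" "unranked (hist_rel h) a b"
      using \<sigma> False gen_history[OF less.prems] unfolding strategy_def by blast
    moreover from ab(2) W have "(a, b) \<in> W \<or> (b, a) \<in> W"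
      by (auto simp: tournament_def total_on_def unranked_def)
    ultimately obtain x y where xy: "\<sigma> h = {x, y}" "(x, y) \<in> W"
      and unranked: "unranked (hist_rel h) x y"
      by (metis insert_commute unranked_sym)
    with less.prems False have next_play: "gen \<sigma> W (h @ [(x, y)])"
      by (blast intro: gen.step)
    have grows: "hist_rel h \<subset> hist_rel (h @ [(x, y)])"
      using unranked by (auto simp: hist_rel_snoc unranked_def)
    then have "card (- hist_rel (h @ [(x, y)])) < card (- hist_rel h)"
      by (intro psubset_card_mono) auto
    with less.hyps next_play grows show ?thesis
      by (meson psubsetE order_trans)
  qed
qed

section \<open>Covering pairs and feasibility\<close>

definition covers :: "('a \<times> 'a) set \<Rightarrow> 'a \<Rightarrow> 'a \<Rightarrow> bool" where
  "covers R x y \<longleftrightarrow> (x, y) \<in> R \<and> \<not> (\<exists>z. (x, z) \<in> R \<and> (z, y) \<in> R)"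

definition reorient :: "('a \<times> 'a) set \<Rightarrow> 'a \<Rightarrow> 'a \<Rightarrow> ('a \<times> 'a) set" where
  "reorient R x y = insert (x, y) (R - {(y, x)})"

lemma tournament_reorient:
  assumes "tournament T" "x \<noteq> y"
  shows "tournament (reorient T x y)"
  using assms by (auto simp: tournament_def reorient_def total_on_def asym_iff)

lemma ranking_reorient:
  assumes R: "ranking R" and cov: "covers R x y \<or> covers R y x"
  shows "ranking (reorient R x y)"
  using cov
proof
  assume "covers R x y"
  with ranking_asym[OF R] have "reorient R x y = R"
    by (auto simp: covers_def reorient_def dest: asymD)
  with R show ?thesis by simp
next
  assume "covers R y x"
  with R show ?thesis
    unfolding ranking_def proto_ranking_def reorient_def covers_def irrefl_def trans_def total_on_def
    by blast
qed

lemma ex_unranked_covering_pair: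
  assumes R: "finite R" "ranking R" and H: "trans H" "H \<subseteq> R" "\<not> total H"
  shows "\<exists>x y. covers R x y \<and> unranked H x y"
proof -
  have R_asym: "asym R" and R_trans: "trans R" and R_irrefl: "irrefl R"
    using R ranking_asym by (auto simp: ranking_def proto_ranking_def)
  have "\<exists>x y. covers R x y \<and> unranked H x y" if "(u, v) \<in> R" "unranked H u v" for u v
    using that
  proof (induction "card {w. (u, w) \<in> R \<and> (w, v) \<in> R}" arbitrary: u v rule: less_induct)
    case less
    show ?case
    proof (cases "covers R u v")
      case True
      with less.prems show ?thesis by blast
    next
      case False
      with less.prems(1) obtain w where uw: "(u, w) \<in> R" and wv: "(w, v) \<in> R"
        by (auto simp: covers_def)
      have "unranked H u w \<or> unranked H w v"
      proof (rule ccontr)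
        assume "\<not> ?thesis"
        with uw wv R_irrefl R_asym H(2) have "(u, w) \<in> H" "(w, v) \<in> H"
          by (auto simp: unranked_def irrefl_def dest: asymD)
        with H(1) less.prems(2) show False
          by (auto simp: unranked_def dest: transD)
      qed
      moreover
      have finite_intervals: "finite {w'. (a, w') \<in> R \<and> (w', b) \<in> R}" for a b
        by (rule finite_subset[of _ "Range R"]) (auto simp: R(1) finite_Range)
      have "{w'. (u, w') \<in> R \<and> (w', w) \<in> R} \<subset> {w'. (u, w') \<in> R \<and> (w', v) \<in> R}"
        "{w'. (w, w') \<in> R \<and> (w', v) \<in> R} \<subset> {w'. (u, w') \<in> R \<and> (w', v) \<in> R}"
        using uw wv R_trans R_irrefl by (auto simp: irrefl_def dest: transD)
      then have "card {w'. (u, w') \<in> R \<and> (w', w) \<in> R} < card {w'. (u, w') \<in> R \<and> (w', v) \<in> R}"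
        "card {w'. (w, w') \<in> R \<and> (w', v) \<in> R} < card {w'. (u, w') \<in> R \<and> (w', v) \<in> R}"
        by (simp_all add: psubset_card_mono finite_intervals)
      ultimately show ?thesis
        using less.hyps uw wv by blast
    qed
  qed
  moreover from H(3) obtain u v where "unranked H u v"
    by (auto simp: total_on_def unranked_def)
  moreover from R(2) have "(u, v) \<in> R \<or> (v, u) \<in> R" if "u \<noteq> v" for u v
    using that by (auto simp: ranking_def total_on_def)
  ultimately show ?thesis
    by (metis unranked_def unranked_sym)
qed

definition covering_strategy :: "('a \<times> 'a) set \<Rightarrow> ('a \<times> 'a) list \<Rightarrow> 'a set" where
  "covering_strategy R h =
     (if \<exists>x y. covers R x y \<and> unranked (hist_rel h) x y
      then SOME s. \<exists>x y. s = {x, y} \<and> covers R x y \<and> unranked (hist_rel h) x y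
      else SOME s. \<exists>x y. s = {x, y} \<and> unranked (hist_rel h) x y)"

lemma covering_strategy_covers:
  assumes "covers R a b" "unranked (hist_rel h) a b"
  obtains x y where "covering_strategy R h = {x, y}" "covers R x y" "unranked (hist_rel h) x y"
proof -
  let ?covering_pair = "\<lambda>s. \<exists>x y. s = {x, y} \<and> covers R x y \<and> unranked (hist_rel h) x y"
  from assms have "\<exists>x y. covers R x y \<and> unranked (hist_rel h) x y"
    by auto
  then have "covering_strategy R h = (SOME s. ?covering_pair s)"
    unfolding covering_strategy_def by (rule if_P)
  moreover have "?covering_pair (SOME s. ?covering_pair s)"
    by (rule someI_ex) (use assms in auto)
  ultimately show ?thesis
    using that by blast
qed

lemma strategy_covering_strategy: "strategy (covering_strategy R)"
  unfolding strategy_def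
proof (intro allI impI)
  fix h :: "('a \<times> 'a) list"
  assume "history h \<and> \<not> terminal h"
  then have not_total: "\<not> total (hist_rel h)"
    by (simp add: terminal_def)
  show "\<exists>x y. covering_strategy R h = {x, y} \<and> unranked (hist_rel h) x y"
  proof (cases "\<exists>x y. covers R x y \<and> unranked (hist_rel h) x y")
    case True
    then obtain a b where "covers R a b" "unranked (hist_rel h) a b"
      by auto
    then obtain x y where "covering_strategy R h = {x, y}" "unranked (hist_rel h) x y"
      by (rule covering_strategy_covers)
    then show ?thesis
      by blast
  next
    case False
    let ?pair = "\<lambda>s. \<exists>x y. s = {x, y} \<and> unranked (hist_rel h) x y"
    from False have "covering_strategy R h = (SOME s. ?pair s)"
      unfolding covering_strategy_def by (rule if_not_P)
    moreover have "?pair (SOME s. ?pair s)"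
      by (rule someI_ex) (use not_total in \<open>auto simp: total_on_def unranked_def\<close>)
    ultimately show ?thesis
      by simp
  qed
qed

lemma gen_covering_strategy_subset:
  assumes R: "finite R" "ranking R" and W: "tournament W" "\<And>x y. covers R x y \<Longrightarrow> (x, y) \<in> W"
  shows "gen (covering_strategy R) W h \<Longrightarrow> hist_rel h \<subseteq> R"
proof (induction rule: gen.induct)
  case Nil
  show ?case by (simp add: hist_rel_def)
next
  case (step h a b)
  have "\<exists>x y. covers R x y \<and> unranked (hist_rel h) x y"
    using step.IH step.hyps(2) R by (intro ex_unranked_covering_pair) (auto simp: terminal_def hist_rel_def)
  then obtain x y where xy: "covering_strategy R h = {x, y}" "covers R x y"
    by (metis covering_strategy_covers)
  with step.hyps(3,5) W have "(a, b) \<in> R"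
    by (auto simp: doubleton_eq_iff covers_def tournament_def asym_iff)
  with step.IH R(2) show ?case
    by (simp add: hist_rel_snoc ranking_def proto_ranking_def trancl_subset_trans)
qed

lemma feasible_if_covering_pairs_win:
  fixes R :: "('a::finite \<times> 'a) set"
  assumes R: "ranking R" and W: "tournament W" "\<And>x y. covers R x y \<Longrightarrow> (x, y) \<in> W"
  shows "feasible W R"
proof -
  obtain h where h: "gen (covering_strategy R) W h" "terminal h"
    using gen_extends_to_terminal[OF strategy_covering_strategy W(1) gen.Nil] by blast
  with R W have "hist_rel h = R"
    by (intro total_subset_asym_eq gen_covering_strategy_subset)
      (auto simp: terminal_def ranking_asym)
  with h show ?thesis
    unfolding feasible_def outcome_def using strategy_covering_strategy by blast
qed

section \<open>The completion of a proto-ranking\<close>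

definition completion :: "('a \<times> 'a) set \<Rightarrow> ('a \<times> 'a) set \<Rightarrow> ('a \<times> 'a) set" where
  "completion P S = S \<union> {(x, y) \<in> P. unranked S x y}"

definition inversions :: "('a \<times> 'a) set \<Rightarrow> ('a \<times> 'a) set \<Rightarrow> ('a \<times> 'a) set" where
  "inversions P R = {(x, y) \<in> R. (y, x) \<in> P}"

lemma completion_empty: "irrefl P \<Longrightarrow> completion P {} = P"
  by (auto simp: completion_def unranked_def irrefl_def)

lemma subset_completion: "S \<subseteq> completion P S"
  by (simp add: completion_def)

lemma completionI: "irrefl P \<Longrightarrow> (x, y) \<in> P \<Longrightarrow> (y, x) \<notin> S \<Longrightarrow> (x, y) \<in> completion P S"
  by (auto simp: completion_def unranked_def irrefl_def)

lemma inversions_completion: "asym P \<Longrightarrow> inversions P (completion P S) = inversions P S"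
  by (auto simp: inversions_def completion_def dest: asymD)

lemma more_aligned_completion:
  assumes "irrefl P" "S \<subseteq> R" "asym R"
  shows "more_aligned P (completion P S) R"
  unfolding more_aligned_def
proof (intro allI impI)
  fix x y
  assume "(x, y) \<in> P" "(x, y) \<in> R"
  with assms(2,3) have "(y, x) \<notin> S"
    by (auto dest: asymD)
  with assms(1) \<open>(x, y) \<in> P\<close> show "(x, y) \<in> completion P S"
    by (rule completionI)
qed

lemma covers_completion_iff:
  assumes "irrefl P" "trans S" "unranked S x y" "(x, y) \<in> P"
  shows "covers (completion P S) x y \<longleftrightarrow>
    \<not> misses_opportunity P S x y \<and> \<not> takes_risk P S x y"
proof -
  have "(x, y) \<in> completion P S"
    using assms(3,4) by (simp add: completion_def)
  moreover have "(\<exists>z. (x, z) \<in> completion P S \<and> (z, y) \<in> completion P S) \<longleftrightarrow>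
      misses_opportunity P S x y \<or> takes_risk P S x y"
  proof
    assume "\<exists>z. (x, z) \<in> completion P S \<and> (z, y) \<in> completion P S"
    with assms(2,3) show "misses_opportunity P S x y \<or> takes_risk P S x y"
      unfolding completion_def misses_opportunity_def takes_risk_def unranked_def
      by (auto dest: transD)
  next
    assume "misses_opportunity P S x y \<or> takes_risk P S x y"
    with assms(1) show "\<exists>z. (x, z) \<in> completion P S \<and> (z, y) \<in> completion P S"
      unfolding misses_opportunity_def takes_risk_def
      by (metis completionI subset_completion subsetD)
  qed
  ultimately show ?thesis
    by (auto simp: covers_def)
qed

lemma completion_trancl_insert:
  assumes L: "ranking (completion P S)" and S: "trans S" "unranked S a b"
    and cov: "covers (completion P S) a b \<or> covers (completion P S) b a"
  shows "completion P ((insert (a, b) S)\<^sup>+) = reorient (completion P S) a b"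
proof (rule total_subset_asym_eq)
  let ?L = "completion P S" and ?S' = "(insert (a, b) S)\<^sup>+"
  have L': "ranking (reorient ?L a b)"
    using L cov by (rule ranking_reorient)
  have "insert (a, b) S \<subseteq> reorient ?L a b"
    using S(2) subset_completion[of S P] by (auto simp: reorient_def unranked_def)
  with L' have "?S' \<subseteq> reorient ?L a b"
    by (simp add: trancl_subset_trans ranking_def proto_ranking_def)
  moreover have "{(x, y) \<in> P. unranked ?S' x y} \<subseteq> reorient ?L a b"
    by (auto simp: completion_def reorient_def unranked_def)
  ultimately show "completion P ?S' \<subseteq> reorient ?L a b"
    by (simp add: completion_def)
  show "asym (reorient ?L a b)"
    using L' by (rule ranking_asym)
  show "total (completion P ?S')"
  proof (rule total_onI)
    fix x y :: 'a
    assume "x \<noteq> y"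
    with L have "(x, y) \<in> ?L \<or> (y, x) \<in> ?L"
      by (auto simp: ranking_def total_on_def)
    then show "(x, y) \<in> completion P ?S' \<or> (y, x) \<in> completion P ?S'"
      by (auto simp: completion_def unranked_def)
  qed
qed

section \<open>Regret-free strategies\<close>

lemma covering_play_invariant:
  assumes P: "ranking P" and h: "gen \<sigma> W h"
    and covering: "\<And>h' x y. gen \<sigma> W h' \<Longrightarrow> \<not> terminal h' \<Longrightarrow> \<sigma> h' = {x, y} \<Longrightarrow>
      unranked (hist_rel h') x y \<Longrightarrow> (x, y) \<in> P \<Longrightarrow> ranking (completion P (hist_rel h')) \<Longrightarrow>
      covers (completion P (hist_rel h')) x y"
  shows "ranking (completion P (hist_rel h)) \<and> inversions P (hist_rel h) \<subseteq> set h"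
  using h
proof (induction rule: gen.induct)
  case Nil
  from P show ?case
    by (simp add: hist_rel_def completion_empty ranking_def proto_ranking_def inversions_def)
next
  case (step h a b)
  let ?L = "completion P (hist_rel h)"
  have P_asym: "asym P"
    using P by (rule ranking_asym)
  from step.hyps(4) P have "(a, b) \<in> P \<or> (b, a) \<in> P"
    by (auto simp: unranked_def ranking_def total_on_def)
  with step covering have "covers ?L a b \<or> covers ?L b a"
    by (metis insert_commute unranked_sym)
  with trans_hist_rel have completion_step: "completion P (hist_rel (h @ [(a, b)])) = reorient ?L a b"
    using step.IH step.hyps(4) unfolding hist_rel_snoc by (intro completion_trancl_insert) auto
  have ranking_step: "ranking (completion P (hist_rel (h @ [(a, b)])))"
    using step.IH \<open>covers ?L a b \<or> covers ?L b a\<close> by (simp add: completion_step ranking_reorient)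
  have "inversions P (hist_rel (h @ [(a, b)])) = inversions P (reorient ?L a b)"
    by (metis completion_step inversions_completion[OF P_asym])
  also have "\<dots> \<subseteq> insert (a, b) (inversions P ?L)"
    by (auto simp: inversions_def reorient_def)
  also have "\<dots> \<subseteq> set (h @ [(a, b)])"
    using step.IH by (simp add: inversions_completion[OF P_asym] subset_insertI2)
  finally show ?case
    using ranking_step by blast
qed

lemma unimprovable_if_inversions_played:
  assumes P: "total P" and W: "tournament W" and h: "gen \<sigma> W h" "terminal h"
    and played: "inversions P (hist_rel h) \<subseteq> set h"
  shows "unimprovable P W (hist_rel h)"
  unfolding unimprovable_def
proof
  let ?R = "hist_rel h"
  assume "\<exists>R'. feasible W R' \<and> R' \<noteq> ?R \<and> more_aligned P R' ?R"
  then obtain \<sigma>' h' where h': "gen \<sigma>' W h'" "terminal h'" "hist_rel h' \<noteq> ?R"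
    and aligned: "more_aligned P (hist_rel h') ?R"
    by (auto simp: feasible_def outcome_def)
  have R: "ranking ?R" and R': "ranking (hist_rel h')"
    using h h' by (auto intro: terminal_history_ranking gen_history)
  have W_asym: "asym W"
    using W by (simp add: tournament_def)
  have "\<not> set h' \<subseteq> ?R"
  proof
    assume "set h' \<subseteq> ?R"
    with R have "hist_rel h' \<subseteq> ?R"
      by (simp add: hist_rel_def trancl_subset_trans ranking_def proto_ranking_def)
    with R R' h'(3) show False
      by (metis total_subset_asym_eq ranking_asym ranking_def)
  qed
  then obtain c d where cd: "(c, d) \<in> set h'" "(c, d) \<notin> ?R"
    by auto
  with gen_set_subset[OF h'(1)] W_asym have "c \<noteq> d" "(c, d) \<in> W"
    by (auto dest: asymD)
  with R cd(2) have dc: "(d, c) \<in> ?R"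
    by (auto simp: ranking_def total_on_def)
  show False
  proof (cases "(d, c) \<in> P")
    case True
    with aligned dc have "(d, c) \<in> hist_rel h'"
      by (simp add: more_aligned_def)
    moreover from cd(1) have "(c, d) \<in> hist_rel h'"
      by (auto simp: hist_rel_def)
    ultimately show False
      using R' ranking_asym by (blast dest: asymD)
  next
    case False
    with P \<open>c \<noteq> d\<close> have "(d, c) \<in> inversions P ?R"
      using dc by (auto simp: inversions_def total_on_def)
    with played gen_set_subset[OF h(1)] have "(d, c) \<in> W"
      by blast
    with W_asym \<open>(c, d) \<in> W\<close> show False
      by (blast dest: asymD)
  qed
qed

lemma regret_free_offers_covering_pair:
  fixes P :: "('a::finite \<times> 'a) set"
  assumes P: "ranking P" and \<sigma>: "strategy \<sigma>" and regret_free: "regret_free P \<sigma>"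
    and h: "gen \<sigma> W\<^sub>0 h" "\<not> terminal h"
    and offer: "\<sigma> h = {x, y}" "unranked (hist_rel h) x y" "(x, y) \<in> P"
    and L: "ranking (completion P (hist_rel h))"
  shows "covers (completion P (hist_rel h)) x y"
proof (rule ccontr)
  let ?S = "hist_rel h" and ?L = "completion P (hist_rel h)"
  assume not_covers: "\<not> covers ?L x y"
  have xy: "(x, y) \<in> ?L" "x \<noteq> y"
    using offer by (auto simp: completion_def unranked_def)
  define W where "W = reorient ?L y x"
  have W: "tournament W"
    unfolding W_def using L xy(2) by (simp add: ranking_imp_tournament tournament_reorient)
  have "set h \<subseteq> W"
    using subset_completion[of ?S P] offer(2) by (auto simp: W_def reorient_def hist_rel_def unranked_def)
  with h(1) have "gen \<sigma> W h"
    by (rule gen_mono)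
  then have "gen \<sigma> W (h @ [(y, x)])"
    by (rule gen.step) (use h(2) offer in \<open>auto simp: W_def reorient_def unranked_sym insert_commute\<close>)
  then obtain hf where hf: "gen \<sigma> W hf" "terminal hf" "hist_rel (h @ [(y, x)]) \<subseteq> hist_rel hf"
    using gen_extends_to_terminal[OF \<sigma> W] by blast
  let ?R = "hist_rel hf"
  have R: "ranking ?R"
    using hf by (blast intro: terminal_history_ranking gen_history)
  have "?S \<subseteq> ?R" "(y, x) \<in> ?R"
    using hf(3) by (auto simp: hist_rel_snoc)
  have "feasible W ?L"
  proof (rule feasible_if_covering_pairs_win[OF L W])
    fix u v
    assume "covers ?L u v"
    with not_covers show "(u, v) \<in> W"
      by (auto simp: W_def reorient_def covers_def)
  qed
  moreover have "?L \<noteq> ?R"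
    using xy(1) \<open>(y, x) \<in> ?R\<close> ranking_asym[OF R] by (auto dest: asymD)
  moreover have "more_aligned P ?L ?R"
    using P \<open>?S \<subseteq> ?R\<close> ranking_asym[OF R]
    by (intro more_aligned_completion) (auto simp: ranking_def proto_ranking_def)
  ultimately have "\<not> unimprovable P W ?R"
    by (auto simp: unimprovable_def)
  with regret_free W hf(1,2) show False
    by (auto simp: regret_free_def outcome_def)
qed

definition offers_covering_pairs :: "('a \<times> 'a) set \<Rightarrow> (('a \<times> 'a) list \<Rightarrow> 'a set) \<Rightarrow> bool" where
  "offers_covering_pairs P \<sigma> \<longleftrightarrow> (\<forall>h x y. on_path \<sigma> h \<longrightarrow> \<sigma> h = {x, y} \<longrightarrow> (x, y) \<in> P \<longrightarrow>
      covers (completion P (hist_rel h)) x y)"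

lemma never_misses_and_risks_iff_offers_covering_pairs:
  assumes P: "ranking P" and \<sigma>: "strategy \<sigma>"
  shows "never_misses P \<sigma> \<and> never_risks P \<sigma> \<longleftrightarrow> offers_covering_pairs P \<sigma>"
proof -
  have "covers (completion P (hist_rel h)) x y \<longleftrightarrow>
      \<not> misses_opportunity P (hist_rel h) x y \<and> \<not> takes_risk P (hist_rel h) x y"
    if "on_path \<sigma> h" "\<sigma> h = {x, y}" "(x, y) \<in> P" for h x y
  proof (rule covers_completion_iff)
    show "irrefl P"
      using P by (simp add: ranking_def proto_ranking_def)
    show "trans (hist_rel h)"
      by (rule trans_hist_rel)
    show "unranked (hist_rel h) x y"
      using that \<sigma> by (auto simp: on_path_def intro: strategy_offers_unranked gen_history)
  qed fact
  then show ?thesis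
    unfolding never_misses_def never_risks_def offers_covering_pairs_def by blast
qed

lemma regret_free_if_offers_covering_pairs:
  assumes P: "ranking P" and covering: "offers_covering_pairs P \<sigma>"
  shows "regret_free P \<sigma>"
  unfolding regret_free_def
proof (intro allI impI)
  fix W R
  assume W: "tournament W" and "outcome \<sigma> W R"
  then obtain h where h: "gen \<sigma> W h" "terminal h" "hist_rel h = R"
    by (auto simp: outcome_def)
  have "inversions P (hist_rel h) \<subseteq> set h"
    using covering_play_invariant[OF P h(1)] covering W
    by (auto simp: offers_covering_pairs_def on_path_def)
  with P W h show "unimprovable P W R"
    using unimprovable_if_inversions_played by (auto simp: ranking_def)
qed

lemma offers_covering_pairs_if_regret_free:
  fixes P :: "('a::finite \<times> 'a) set"
  assumes P: "ranking P" and \<sigma>: "strategy \<sigma>" and regret_free: "regret_free P \<sigma>"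
  shows "offers_covering_pairs P \<sigma>"
  unfolding offers_covering_pairs_def
proof (intro allI impI)
  fix h x y
  assume "on_path \<sigma> h" "\<sigma> h = {x, y}" "(x, y) \<in> P"
  then obtain W where h: "gen \<sigma> W h" "\<not> terminal h"
    by (auto simp: on_path_def)
  have "ranking (completion P (hist_rel h))"
    using covering_play_invariant[OF P h(1)] regret_free_offers_covering_pair[OF P \<sigma> regret_free]
    by blast
  then show "covers (completion P (hist_rel h)) x y"
    using regret_free_offers_covering_pair[OF P \<sigma> regret_free h] \<open>\<sigma> h = {x, y}\<close> \<open>(x, y) \<in> P\<close>
      strategy_offers_unranked[OF \<sigma> gen_history[OF h(1)] h(2)]
    by blast
qed

theorem theorem3:
  fixes P :: "('a::finite \<times> 'a) set"
    and \<sigma> :: "('a \<times> 'a) list \<Rightarrow> 'a set"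
  assumes "ranking P"
    and "strategy \<sigma>"
  shows "regret_free P \<sigma> \<longleftrightarrow> never_misses P \<sigma> \<and> never_risks P \<sigma>"
  using never_misses_and_risks_iff_offers_covering_pairs[OF assms] regret_free_if_offers_covering_pairs[OF assms(1)]
    offers_covering_pairs_if_regret_free[OF assms] by blast

end
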